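(* Let $d\ge 2$ and $N\ge 2$ be integers, let $X=\{x^1,\dots,x^N\}\subseteq\mathbb{R}^d$, and let $C\subseteq\mathbb{R}^d$ be a proper closed convex cone. Then: (i) The indicator $\mathcal C_X$ induces a refinement of $\succeq_C$ on $\mathcal P(X)$: for all $A,B\subseteq X$ with $A\succeq_C B$ and $B\not\succeq_C A$, one has $\mathcal C_X(A)>\mathcal C_X(B)$. (ii) The indicator $R^{\triangledown}_C$ induces a weak refinement of $\succeq_C$ on $\mathcal P(X)$: for all $A,B\subseteq X$ with $A\succeq_C B$ and $B\not\succeq_C A$, one has $R^{\triangledown}_C(A)\ge R^{\triangledown}_C(B)$. (iii) In general $R^{\triangledown}_C$ does not induce a refinement of $\succeq_C$ on $\mathcal P(X)$: there exist $X$, $C$ (e.g. $d=2$, $C=\mathbb{R}^2_+$) and $A,B\subseteq X$ with $A\succeq_C B$, $B\not\succeq_C A$ and $R^{\triangledown}_C(A)=R^{\triangledown}_C(B)$.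
   Context: A proper closed convex cone $C\subseteq\mathbb{R}^d$ is a closed set with $sC=C$ for all $s\ge 0$, $C+C=C$, and $C\notin\{\varnothing,\mathbb{R}^d\}$; it induces the preorder $y\leq_C z$ iff $z-y\in C$ (also written $z\ge_C y$). The dual cone is $C^+=\{v\in\mathbb{R}^d\mid \forall z\in C: v^\top z\ge 0\}$. $\mathcal P(X)$ is the power set of $X$ (including $\varnothing$). For $A,B\subseteq\mathbb{R}^d$, $A\succeq_C B$ means: for every $b\in B$ there is $a\in A$ with $a\ge_C b$. Define $r_{X,C}(z)=\min_{v\in C^+}\#\{x\in X\mid v^\top x\le v^\top z\}$ for $z\in\mathbb{R}^d$ ($\#$ = cardinality), $R^{\triangledown}_C(A)=\sup_{a\in A} r_{X,C}(a)$ (with $\sup\varnothing=0$), and $\mathcal C_X(A)=\#\{x\in X\mid \exists a\in A: a\ge_C x\}$. An indicator $I:\mathcal P(X)\to\mathbb{R}$ induces the relation $A\succeq_I B:\Leftrightarrow I(A)\ge I(B)$; it is called a refinement of $\succeq_C$ if $A\succeq_C B$, $B\not\succeq_C A$ imply $I(A)>I(B)$, and a weak refinement if $A\succeq_C B$, $B\not\succeq_C A$ imply $I(A)\ge I(B)$. *)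

theory Defs
  imports "HOL-Analysis.Analysis"
begin

text \<open>Proper closed convex cone. The scaling condition is read as s C = C for s > 0
  (for s = 0 the literal condition would force C = {0}).\<close>

definition pccc :: "(real^'n) set \<Rightarrow> bool" where
  "pccc C \<longleftrightarrow> closed C \<and> (\<forall>s>0. (\<lambda>z. s *\<^sub>R z) ` C = C)
     \<and> {y + z | y z. y \<in> C \<and> z \<in> C} = C \<and> C \<noteq> {} \<and> C \<noteq> UNIV"

definition cone_le :: "(real^'n) set \<Rightarrow> real^'n \<Rightarrow> real^'n \<Rightarrow> bool" where
  "cone_le C y z \<longleftrightarrow> z - y \<in> C"

definition dual_cone :: "(real^'n) set \<Rightarrow> (real^'n) set" where
  "dual_cone C = {v. \<forall>z\<in>C. v \<bullet> z \<ge> 0}"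

definition set_dom :: "(real^'n) set \<Rightarrow> (real^'n) set \<Rightarrow> (real^'n) set \<Rightarrow> bool" where
  "set_dom C A B \<longleftrightarrow> (\<forall>b\<in>B. \<exists>a\<in>A. cone_le C b a)"

definition rank_XC :: "(real^'n) set \<Rightarrow> (real^'n) set \<Rightarrow> real^'n \<Rightarrow> nat" where
  "rank_XC X C z = Inf ((\<lambda>v. card {x\<in>X. v \<bullet> x \<le> v \<bullet> z}) ` dual_cone C)"

definition R_tri :: "(real^'n) set \<Rightarrow> (real^'n) set \<Rightarrow> (real^'n) set \<Rightarrow> nat" where
  "R_tri X C A = (if A = {} then 0 else Sup (rank_XC X C ` A))"

definition cover_XC :: "(real^'n) set \<Rightarrow> (real^'n) set \<Rightarrow> (real^'n) set \<Rightarrow> nat" where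
  "cover_XC X C A = card {x\<in>X. \<exists>a\<in>A. cone_le C x a}"

end

theory Submission
  imports Defs
begin

text \<open>(i) Domination is transitive, so the points of X dominated by B are also dominated by A;
  a point of A dominated by no point of B is dominated by itself through A but not through B,
  so the inclusion is strict. (ii) Every v in the dual cone is monotone along \<open>\<le>\<^sub>C\<close>,
  hence so is each count in the minimum defining the rank, and the rank is monotone.
  (iii) For X = {0, (1,-1)} and the nonnegative orthant, each point of X is the unique minimiser
  of a coordinate functional, so both points have rank 1, and X and {0} get the same value
  although X strictly dominates {0}.\<close>

lemma pccc_zero:
  assumes "pccc C"
  shows "0 \<in> C"
proof -
  from assms obtain c where c: "c \<in> C" and closed: "closed C"
    and scale: "\<forall>s>0. (\<lambda>z. s *\<^sub>R z) ` C = C"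
    unfolding pccc_def by blast
  have shrink: "inverse (real (Suc n)) *\<^sub>R c \<in> C" for n
  proof -
    have "(\<lambda>z. inverse (real (Suc n)) *\<^sub>R z) ` C = C" using scale by simp
    then show ?thesis using c by blast
  qed
  have "(\<lambda>n. inverse (real (Suc n)) *\<^sub>R c) \<longlonglongrightarrow> 0 *\<^sub>R c"
    by (intro tendsto_scaleR LIMSEQ_inverse_real_of_nat tendsto_const)
  then show ?thesis using closed_sequentially[OF closed] shrink by fastforce
qed

lemma pccc_add:
  assumes "pccc C" "y \<in> C" "z \<in> C"
  shows "y + z \<in> C"
proof -
  have "{y + z | y z. y \<in> C \<and> z \<in> C} = C" using assms(1) unfolding pccc_def by blast
  then show ?thesis using assms by blast
qed

lemma cone_le_refl: "pccc C \<Longrightarrow> cone_le C x x"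
  unfolding cone_le_def by (simp add: pccc_zero)

lemma cone_le_trans:
  assumes "pccc C" "cone_le C x y" "cone_le C y z"
  shows "cone_le C x z"
proof -
  have "(z - y) + (y - x) \<in> C" using pccc_add assms unfolding cone_le_def by blast
  then show ?thesis unfolding cone_le_def by simp
qed

lemma zero_in_dual_cone: "0 \<in> dual_cone C"
  unfolding dual_cone_def by simp

lemma rank_XC_mono:
  assumes "finite X" "cone_le C z w"
  shows "rank_XC X C z \<le> rank_XC X C w"
proof -
  have "card {x\<in>X. v \<bullet> x \<le> v \<bullet> z} \<le> card {x\<in>X. v \<bullet> x \<le> v \<bullet> w}"
    if "v \<in> dual_cone C" for v
  proof -
    have "v \<bullet> (w - z) \<ge> 0" using that assms(2) unfolding dual_cone_def cone_le_def by blast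
    then have "v \<bullet> z \<le> v \<bullet> w" by (simp add: inner_diff_right)
    then show ?thesis using assms(1) by (intro card_mono) auto
  qed
  then show ?thesis unfolding rank_XC_def
    by (intro cInf_greatest) (auto intro!: cInf_lower2 zero_in_dual_cone)
qed

lemma rank_XC_eq_1:
  assumes "finite X" "z \<in> X" "v \<in> dual_cone C"
    and unique_min: "\<And>x. x \<in> X \<Longrightarrow> v \<bullet> x \<le> v \<bullet> z \<Longrightarrow> x = z"
  shows "rank_XC X C z = 1"
proof (rule antisym)
  have "{x\<in>X. v \<bullet> x \<le> v \<bullet> z} = {z}" using assms by auto
  then show "rank_XC X C z \<le> 1"
    unfolding rank_XC_def using assms(3) by (intro cInf_lower2) auto
  have "1 \<le> card {x\<in>X. u \<bullet> x \<le> u \<bullet> z}" for u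
  proof -
    have "z \<in> {x\<in>X. u \<bullet> x \<le> u \<bullet> z}" using assms(2) by simp
    then show ?thesis using assms(1) by (simp add: Suc_le_eq card_gt_0_iff) blast
  qed
  then show "1 \<le> rank_XC X C z"
    unfolding rank_XC_def using assms(3) by (intro cInf_greatest) auto
qed

lemma cover_XC_strict_mono:
  assumes "finite X" "pccc C" "A \<subseteq> X" "set_dom C A B" "\<not> set_dom C B A"
  shows "cover_XC X C B < cover_XC X C A"
proof -
  let ?down = "\<lambda>S. {x\<in>X. \<exists>a\<in>S. cone_le C x a}"
  have "?down B \<subseteq> ?down A"
    using assms(4) cone_le_trans[OF assms(2)] unfolding set_dom_def by blast
  moreover obtain a where "a \<in> A" "\<forall>b\<in>B. \<not> cone_le C a b"
    using assms(5) unfolding set_dom_def by blast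
  then have "a \<in> ?down A" "a \<notin> ?down B" using assms(3) cone_le_refl[OF assms(2)] by auto
  ultimately have "?down B \<subset> ?down A" by blast
  then show ?thesis unfolding cover_XC_def using assms(1) by (intro psubset_card_mono) auto
qed

lemma R_tri_mono:
  assumes "finite X" "finite A" "set_dom C A B"
  shows "R_tri X C B \<le> R_tri X C A"
proof (cases "B = {}")
  case True
  then show ?thesis unfolding R_tri_def by simp
next
  case False
  then have "A \<noteq> {}" using assms(3) unfolding set_dom_def by blast
  have "rank_XC X C b \<le> Max (rank_XC X C ` A)" if "b \<in> B" for b
  proof -
    obtain a where "a \<in> A" "cone_le C b a" using assms(3) \<open>b \<in> B\<close> unfolding set_dom_def by blast
    then have "rank_XC X C b \<le> rank_XC X C a" using rank_XC_mono assms(1) by blast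
    also have "\<dots> \<le> Max (rank_XC X C ` A)" using \<open>a \<in> A\<close> assms(2) by simp
    finally show ?thesis .
  qed
  then show ?thesis unfolding R_tri_def using False \<open>A \<noteq> {}\<close> assms(2)
    by (simp add: cSup_eq_Max) (intro cSup_least; auto)
qed

lemma axis_in_dual_cone_orthant: "axis i 1 \<in> dual_cone {z::real^'n. \<forall>i. z $ i \<ge> 0}"
  unfolding dual_cone_def by (auto simp: inner_axis')

lemma orthant_R_tri_not_strict:
  "\<exists>(X :: (real^2) set) A B. finite X \<and> card X \<ge> 2 \<and> A \<subseteq> X \<and> B \<subseteq> X \<and>
     set_dom {z. \<forall>i. z $ i \<ge> 0} A B \<and> \<not> set_dom {z. \<forall>i. z $ i \<ge> 0} B A \<and>
     R_tri X {z. \<forall>i. z $ i \<ge> 0} A = R_tri X {z. \<forall>i. z $ i \<ge> 0} B"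
proof -
  let ?C = "{z::real^2. \<forall>i. z $ i \<ge> 0}"
  define p :: "real^2" where "p = axis 1 1 - axis 2 1"
  let ?X = "{0, p}"
  have p1: "p $ 1 = 1" and p2: "p $ 2 = -1" unfolding p_def by (auto simp: axis_def)
  then have "p \<noteq> 0" by auto
  then have "card ?X = 2" by simp
  moreover have "set_dom ?C ?X {0}" unfolding set_dom_def cone_le_def by auto
  moreover have "\<not> set_dom ?C {0} ?X" unfolding set_dom_def cone_le_def
    using p1 by (auto intro!: exI[of _ 1])
  moreover have "rank_XC ?X ?C 0 = 1"
    using p1 by (intro rank_XC_eq_1[OF _ _ axis_in_dual_cone_orthant[of 1]]) (auto simp: inner_axis')
  moreover have "rank_XC ?X ?C p = 1"
    using p2 by (intro rank_XC_eq_1[OF _ _ axis_in_dual_cone_orthant[of 2]]) (auto simp: inner_axis')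
  ultimately show ?thesis unfolding R_tri_def by (intro exI[of _ ?X] exI[of _ "{0}"]) auto
qed

theorem proposition5p3:
  shows "(\<forall>(X :: (real^'n) set) C. CARD('n) \<ge> 2 \<longrightarrow> finite X \<longrightarrow> card X \<ge> 2 \<longrightarrow> pccc C \<longrightarrow>
            (\<forall>A B. A \<subseteq> X \<longrightarrow> B \<subseteq> X \<longrightarrow> set_dom C A B \<longrightarrow> \<not> set_dom C B A \<longrightarrow>
               cover_XC X C A > cover_XC X C B))
       \<and> (\<forall>(X :: (real^'n) set) C. CARD('n) \<ge> 2 \<longrightarrow> finite X \<longrightarrow> card X \<ge> 2 \<longrightarrow> pccc C \<longrightarrow>
            (\<forall>A B. A \<subseteq> X \<longrightarrow> B \<subseteq> X \<longrightarrow> set_dom C A B \<longrightarrow> \<not> set_dom C B A \<longrightarrow>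
               R_tri X C A \<ge> R_tri X C B))
       \<and> (\<exists>(X :: (real^2) set) A B. finite X \<and> card X \<ge> 2 \<and>
            A \<subseteq> X \<and> B \<subseteq> X \<and>
            set_dom {z. \<forall>i. z $ i \<ge> 0} A B \<and> \<not> set_dom {z. \<forall>i. z $ i \<ge> 0} B A \<and>
            R_tri X {z. \<forall>i. z $ i \<ge> 0} A = R_tri X {z. \<forall>i. z $ i \<ge> 0} B)"
proof (intro conjI allI impI)
  fix X :: "(real^'n) set" and C A B
  assume "finite X" "pccc C" "A \<subseteq> X" "set_dom C A B"
  then show "R_tri X C B \<le> R_tri X C A"
    using R_tri_mono finite_subset by blast
  assume "\<not> set_dom C B A"
  then show "cover_XC X C B < cover_XC X C A"
    using cover_XC_strict_mono \<open>finite X\<close> \<open>pccc C\<close> \<open>A \<subseteq> X\<close> \<open>set_dom C A B\<close> by blast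
qed (rule orthant_R_tri_not_strict)

end
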